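(* For a suitable realisation of a local affine Gaudin model (setting below), whose twist function $\varphi$ has simple zeros $\zeta_1,\dots,\zeta_M$, the momentum $\mathcal P_{\mathcal A}$ of the algebra of observables satisfies $\mathcal P_{\mathcal A}=\sum_{i=1}^M\mathcal Q_i$, where $\mathcal Q_i=-\frac{1}{2\varphi'(\zeta_i)}\int_{\mathbb D}dx\,\kappa\big(\Gamma(\zeta_i,x),\Gamma(\zeta_i,x)\big)$.
   Context: $\mathfrak g$: finite-dimensional simple complex Lie algebra, $\kappa$: minus its Killing form, $C_{12}=I_a\otimes I^a$ for dual bases w.r.t. $\kappa$; $\mathfrak g_0$: real form, fixed points of an antilinear involution $\tau$. $\mathbb D$ is $\mathbb R$ or the circle; $\delta'_{xy}=\partial_x\delta(x-y)$. Data: a finite set of sites $\Sigma=\Sigma_r\sqcup\Sigma_c\sqcup\bar\Sigma_c$ (real sites, complex sites, their conjugates $\bar\alpha$), multiplicities $m_\alpha\ge1$ ($m_{\bar\alpha}=m_\alpha$), levels $\ell^\alpha_{[p]}$, $0\le p\le m_\alpha-1$ (real for real sites, $\ell^{\bar\alpha}_{[p]}=\overline{\ell^\alpha_{[p]}}$), with $\ell^\alpha_{[m_\alpha-1]}\neq0$; pairwise distinct positions $z_\alpha$ (real for real sites, $z_{\bar\alpha}=\overline{z_\alpha}$); a real $\ell^\infty\neq0$. A realisation is a Poisson algebra $\mathcal A$ of local observables of a field theory on $\mathbb D$ containing $\mathfrak g$-valued fields $\mathcal J^\alpha_{[p]}(x)$ with $\{\mathcal J^\alpha_{[p]}{}_1(x),\mathcal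 J^\beta_{[q]}{}_2(y)\}=\delta_{\alpha\beta}([C_{12},\mathcal J^\alpha_{[p+q]}{}_1(x)]\delta_{xy}-\ell^\alpha_{[p+q]}C_{12}\delta'_{xy})$ if $p+q<m_\alpha$ and $0$ otherwise, $\tau(\mathcal J^\alpha_{[p]})=\mathcal J^\alpha_{[p]}$ for real $\alpha$ and $\tau(\mathcal J^\alpha_{[p]})=\mathcal J^{\bar\alpha}_{[p]}$ for complex $\alpha$. Twist function $\varphi(z)=\sum_{\alpha\in\Sigma}\sum_{p=0}^{m_\alpha-1}\frac{\ell^\alpha_{[p]}}{(z-z_\alpha)^{p+1}}-\ell^\infty$; Gaudin Lax matrix $\Gamma(z,x)=\sum_{\alpha}\sum_p\frac{\mathcal J^\alpha_{[p]}(x)}{(z-z_\alpha)^{p+1}}$; $M=\sum_\alpha m_\alpha$. For each $\alpha$, the numbers $\eta^\alpha_{[p]}$, $0\le p\le 2m_\alpha-2$, are the unique solution of $\sum_{p=0}^{m_\alpha-1-r}\eta^\alpha_{[p+q]}\ell^\alpha_{[p+r]}=\delta_{q,r}$ for all $q,r\in\{0,\dots,m_\alpha-1\}$, and $\mathcal D^\alpha_{[p]}=\frac12\sum_{q,r=0,\,q+r\ge p}^{m_\alpha-1}\eta^\alpha_{[q+r-p]}\int_{\mathbb D}dx\,\kappa(\mathcal J^\alpha_{[q]}(x),\mathcal J^\alpha_{[r]}(x))$. The momentum $\mathcal P_{\mathcal A}$ of $\mathcal A$ is the charge whose Hamiltonian flow $\{\mathcal P_{\mathcal A},\cdot\}$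 is $\partial_x$ on all fields of $\mathcal A$. The realisation is called suitable if $\sum_{\alpha\in\Sigma}\mathcal D^\alpha_{[0]}=\mathcal P_{\mathcal A}$. *)

theory Defs
  imports "HOL-Analysis.Analysis"
begin

definition lb :: "('n::finite \<Rightarrow> 'n \<Rightarrow> 'n \<Rightarrow> complex) \<Rightarrow> complex^'n \<Rightarrow> complex^'n \<Rightarrow> complex^'n" where
  "lb C x y = (\<chi> k. \<Sum>i\<in>UNIV. \<Sum>j\<in>UNIV. x$i * y$j * C i j k)"

definition lie_algebra :: "('n::finite \<Rightarrow> 'n \<Rightarrow> 'n \<Rightarrow> complex) \<Rightarrow> bool" where
  "lie_algebra C \<longleftrightarrow>
     (\<forall>x y. lb C x y = - lb C y x) \<and>
     (\<forall>x y z. lb C x (lb C y z) + lb C y (lb C z x) + lb C z (lb C x y) = 0)"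

definition lie_ideal :: "('n::finite \<Rightarrow> 'n \<Rightarrow> 'n \<Rightarrow> complex) \<Rightarrow> (complex^'n) set \<Rightarrow> bool" where
  "lie_ideal C I \<longleftrightarrow> 0 \<in> I \<and> (\<forall>x\<in>I. \<forall>y\<in>I. x + y \<in> I) \<and> (\<forall>a. \<forall>x\<in>I. a *s x \<in> I)
     \<and> (\<forall>x\<in>I. \<forall>y. lb C x y \<in> I)"

definition simple_lie_algebra :: "('n::finite \<Rightarrow> 'n \<Rightarrow> 'n \<Rightarrow> complex) \<Rightarrow> bool" where
  "simple_lie_algebra C \<longleftrightarrow> lie_algebra C \<and> (\<exists>x y. lb C x y \<noteq> 0) \<and>
     (\<forall>I. lie_ideal C I \<longrightarrow> I = {0} \<or> I = UNIV)"

text \<open>Killing form: trace(ad x o ad y), with ad(e_i) e_a = sum_b C i a b e_b.\<close>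
definition killing :: "('n::finite \<Rightarrow> 'n \<Rightarrow> 'n \<Rightarrow> complex) \<Rightarrow> complex^'n \<Rightarrow> complex^'n \<Rightarrow> complex" where
  "killing C x y = (\<Sum>i\<in>UNIV. \<Sum>j\<in>UNIV. x$i * y$j * (\<Sum>a\<in>UNIV. \<Sum>b\<in>UNIV. C i a b * C j b a))"

definition kap :: "('n::finite \<Rightarrow> 'n \<Rightarrow> 'n \<Rightarrow> complex) \<Rightarrow> complex^'n \<Rightarrow> complex^'n \<Rightarrow> complex" where
  "kap C x y = - killing C x y"

text \<open>Antilinear involutive Lie algebra automorphism (defining the real form).\<close>
definition antilinear_involution :: "('n::finite \<Rightarrow> 'n \<Rightarrow> 'n \<Rightarrow> complex) \<Rightarrow> (complex^'n \<Rightarrow> complex^'n) \<Rightarrow> bool" where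
  "antilinear_involution C \<tau> \<longleftrightarrow>
     (\<forall>x y. \<tau> (x + y) = \<tau> x + \<tau> y) \<and> (\<forall>a x. \<tau> (a *s x) = cnj a *s \<tau> x) \<and>
     (\<forall>x. \<tau> (\<tau> x) = x) \<and> (\<forall>x y. \<tau> (lb C x y) = lb C (\<tau> x) (\<tau> y))"

text \<open>D = R (circ = False) or the circle R/LZ (circ = True), the latter represented by
  L-periodic functions integrated over one period [0,L].\<close>
definition dom :: "bool \<Rightarrow> real \<Rightarrow> real set" where
  "dom circ L = (if circ then {0..L} else UNIV)"

definition smooth_fun :: "(real \<Rightarrow> 'v::real_normed_vector) \<Rightarrow> bool" where
  "smooth_fun f \<longleftrightarrow> (\<exists>F. F 0 = f \<and> (\<forall>k x. (F k has_vector_derivative F (Suc k) x) (at x)))"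

definition test_fun :: "bool \<Rightarrow> real \<Rightarrow> (real \<Rightarrow> 'v::real_normed_vector) \<Rightarrow> bool" where
  "test_fun circ L f \<longleftrightarrow> smooth_fun f \<and>
     (if circ then (\<forall>x. f (x + L) = f x) else bounded {x. f x \<noteq> 0})"

definition smear :: "bool \<Rightarrow> real \<Rightarrow> ('c \<Rightarrow> real \<Rightarrow> complex) \<Rightarrow> (real \<Rightarrow> complex) \<Rightarrow> 'c \<Rightarrow> complex" where
  "smear circ L \<phi> f = (\<lambda>c. integral (dom circ L) (\<lambda>x. f x * \<phi> c x))"

definition gsmear :: "('n::finite \<Rightarrow> 'n \<Rightarrow> 'n \<Rightarrow> complex) \<Rightarrow> bool \<Rightarrow> real \<Rightarrow>
    ('c \<Rightarrow> real \<Rightarrow> complex^'n) \<Rightarrow> (real \<Rightarrow> complex^'n) \<Rightarrow> 'c \<Rightarrow> complex" where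
  "gsmear C circ L J f = (\<lambda>c. integral (dom circ L) (\<lambda>x. kap C (f x) (J c x)))"

definition poisson_algebra :: "('c \<Rightarrow> complex) set \<Rightarrow>
    (('c \<Rightarrow> complex) \<Rightarrow> ('c \<Rightarrow> complex) \<Rightarrow> ('c \<Rightarrow> complex)) \<Rightarrow> bool" where
  "poisson_algebra A pb \<longleftrightarrow>
     (\<forall>k. (\<lambda>_. k) \<in> A) \<and>
     (\<forall>a\<in>A. \<forall>b\<in>A. (\<lambda>c. a c + b c) \<in> A \<and> (\<lambda>c. a c * b c) \<in> A \<and> pb a b \<in> A) \<and>
     (\<forall>k. \<forall>a\<in>A. (\<lambda>c. k * a c) \<in> A) \<and>
     (\<forall>a\<in>A. \<forall>b\<in>A. pb a b = (\<lambda>c. - pb b a c)) \<and>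
     (\<forall>a\<in>A. \<forall>b\<in>A. \<forall>d\<in>A. pb a (\<lambda>c. b c + d c) = (\<lambda>c. pb a b c + pb a d c)) \<and>
     (\<forall>k. \<forall>a\<in>A. \<forall>b\<in>A. pb a (\<lambda>c. k * b c) = (\<lambda>c. k * pb a b c)) \<and>
     (\<forall>a\<in>A. \<forall>b\<in>A. \<forall>d\<in>A. pb a (\<lambda>c. b c * d c) = (\<lambda>c. pb a b c * d c + b c * pb a d c)) \<and>
     (\<forall>a\<in>A. \<forall>b\<in>A. \<forall>d\<in>A.
        (\<lambda>c. pb a (pb b d) c + pb b (pb d a) c + pb d (pb a b) c) = (\<lambda>_. 0))"

definition twist :: "'s set \<Rightarrow> ('s \<Rightarrow> nat) \<Rightarrow> ('s \<Rightarrow> nat \<Rightarrow> complex) \<Rightarrow> ('s \<Rightarrow> complex) \<Rightarrow> real \<Rightarrow> complex \<Rightarrow> complex" where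
  "twist S m lev z linf w =
     (\<Sum>\<alpha>\<in>S. \<Sum>p<m \<alpha>. lev \<alpha> p / (w - z \<alpha>) ^ (p + 1)) - complex_of_real linf"

definition gaudin_lax :: "'s set \<Rightarrow> ('s \<Rightarrow> nat) \<Rightarrow> ('s \<Rightarrow> complex) \<Rightarrow>
    ('s \<Rightarrow> nat \<Rightarrow> 'c \<Rightarrow> real \<Rightarrow> complex^'n) \<Rightarrow> complex \<Rightarrow> 'c \<Rightarrow> real \<Rightarrow> complex^'n" where
  "gaudin_lax S m z J w c x = (\<Sum>\<alpha>\<in>S. \<Sum>p<m \<alpha>. (1 / (w - z \<alpha>) ^ (p + 1)) *s J \<alpha> p c x)"

definition Dzero :: "('n::finite \<Rightarrow> 'n \<Rightarrow> 'n \<Rightarrow> complex) \<Rightarrow> bool \<Rightarrow> real \<Rightarrow> ('s \<Rightarrow> nat) \<Rightarrow>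
    ('s \<Rightarrow> nat \<Rightarrow> complex) \<Rightarrow> ('s \<Rightarrow> nat \<Rightarrow> 'c \<Rightarrow> real \<Rightarrow> complex^'n) \<Rightarrow> 's \<Rightarrow> 'c \<Rightarrow> complex" where
  "Dzero C circ L m eta J \<alpha> = (\<lambda>c. (1/2) * (\<Sum>q<m \<alpha>. \<Sum>r<m \<alpha>.
      eta \<alpha> (q + r) * integral (dom circ L) (\<lambda>x. kap C (J \<alpha> q c x) (J \<alpha> r c x))))"

definition Qcharge :: "('n::finite \<Rightarrow> 'n \<Rightarrow> 'n \<Rightarrow> complex) \<Rightarrow> bool \<Rightarrow> real \<Rightarrow> 's set \<Rightarrow> ('s \<Rightarrow> nat) \<Rightarrow>
    ('s \<Rightarrow> nat \<Rightarrow> complex) \<Rightarrow> ('s \<Rightarrow> complex) \<Rightarrow> real \<Rightarrow>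
    ('s \<Rightarrow> nat \<Rightarrow> 'c \<Rightarrow> real \<Rightarrow> complex^'n) \<Rightarrow> complex \<Rightarrow> 'c \<Rightarrow> complex" where
  "Qcharge C circ L S m lev z linf J \<zeta> = (\<lambda>c.
     - (1 / (2 * deriv (twist S m lev z linf) \<zeta>)) *
       integral (dom circ L) (\<lambda>x. kap C (gaudin_lax S m z J \<zeta> c x) (gaudin_lax S m z J \<zeta> c x)))"

end

theory Submission
  imports Defs "HOL-Computational_Algebra.Polynomial"
begin

text \<open>Clearing denominators, the twist function is
  \<open>\<phi>(w) = -\<ell>\<^sup>\<infinity> \<Prod>\<^sub>i (w - \<zeta>\<^sub>i) / \<Prod>\<^sub>\<alpha> (w - z\<^sub>\<alpha>)\<^bsup>m\<^sub>\<alpha>\<^esup>\<close>, so for a rational function \<open>f\<close> with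
  poles of order at most \<open>m\<^sub>\<alpha>\<close> at the sites, \<open>\<Sum>\<^sub>i f(\<zeta>\<^sub>i) / \<phi>'(\<zeta>\<^sub>i)\<close> is, by Lagrange
  interpolation at the \<open>M\<close> zeros, a leading coefficient of a polynomial of degree below \<open>M\<close>.
  This kills all such sums with poles at two different sites, and together with \<open>\<phi>(\<zeta>\<^sub>i) = 0\<close>
  it shows that \<open>-\<Sum>\<^sub>i 1 / (\<phi>'(\<zeta>\<^sub>i) (\<zeta>\<^sub>i - z\<^sub>\<alpha>)\<^bsup>n+2\<^esup>)\<close> solves the triangular system
  defining \<open>\<eta>\<^sup>\<alpha>\<^sub>[\<^sub>n\<^sub>]\<close>. Expanding \<open>\<kappa>(\<Gamma>(\<zeta>\<^sub>i), \<Gamma>(\<zeta>\<^sub>i))\<close> bilinearly and summing over \<open>i\<close>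
  therefore turns \<open>\<Sum>\<^sub>i \<Q>\<^sub>i\<close> into \<open>\<Sum>\<^sub>\<alpha> \<D>\<^sup>\<alpha>\<^sub>[\<^sub>0\<^sub>]\<close>, which is the momentum by suitability.\<close>

lemma degree_prod_linear_powers:
  "degree (\<Prod>a\<in>A. [:- c a, 1:] ^ k a :: 'a::idom poly) = (\<Sum>a\<in>A. k a)"
  by (subst degree_prod_eq_sum_degree) (auto simp: degree_linear_power)

lemma lead_coeff_prod_linear_powers:
  "lead_coeff (\<Prod>a\<in>A. [:- c a, 1:] ^ k a :: 'a::idom poly) = 1"
  by (simp add: lead_coeff_prod lead_coeff_power)

lemma prod_power_diff_mult:
  fixes f :: "'a \<Rightarrow> 'b::comm_monoid_mult"
  assumes "\<forall>\<gamma>\<in>S. e \<gamma> \<le> k \<gamma>"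
  shows "(\<Prod>\<gamma>\<in>S. f \<gamma> ^ (k \<gamma> - e \<gamma>)) * (\<Prod>\<gamma>\<in>S. f \<gamma> ^ e \<gamma>) = (\<Prod>\<gamma>\<in>S. f \<gamma> ^ k \<gamma>)"
  using assms by (auto simp: prod.distrib[symmetric] power_add[symmetric] intro!: prod.cong)

lemma prod_power_delta:
  assumes "finite S" "\<alpha> \<in> S"
  shows "(\<Prod>\<gamma>\<in>S. f \<gamma> ^ (if \<gamma> = \<alpha> then k else 0)) = (f \<alpha> :: 'a::comm_monoid_mult) ^ k"
  using assms by (simp add: if_distrib[of "power _"] cong: if_cong)

lemma lagrange_leading_coeff:
  fixes \<zeta> :: "'i \<Rightarrow> 'a::field" and p :: "'a poly"
  assumes fin: "finite I" and inj: "inj_on \<zeta> I" and deg: "degree p < card I"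
  shows "(\<Sum>i\<in>I. poly p (\<zeta> i) / (\<Prod>j\<in>I - {i}. \<zeta> i - \<zeta> j)) = coeff p (card I - 1)"
proof -
  define d where "d i = (\<Prod>j\<in>I - {i}. \<zeta> i - \<zeta> j)" for i
  define b where "b i = (\<Prod>j\<in>I - {i}. [:- \<zeta> j, 1:])" for i
  define q where "q = (\<Sum>i\<in>I. smult (poly p (\<zeta> i) / d i) (b i))"
  have d_nonzero: "d i \<noteq> 0" if "i \<in> I" for i
    unfolding d_def using fin inj that by (auto simp: inj_on_def)
  have degree_b: "degree (b i) = card I - 1" if "i \<in> I" for i
    using degree_prod_linear_powers[of \<zeta> "\<lambda>_. 1" "I - {i}"] fin that by (simp add: b_def)
  have coeff_b: "coeff (b i) (card I - 1) = 1" if "i \<in> I" for i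
    using lead_coeff_prod_linear_powers[of \<zeta> "\<lambda>_. 1" "I - {i}"] degree_b[OF that]
    by (simp add: b_def)
  have poly_b: "poly (b i) (\<zeta> k) = (if i = k then d i else 0)" if "i \<in> I" "k \<in> I" for i k
    using fin that by (auto simp: b_def d_def poly_prod prod_zero_iff)
  have "p = q"
  proof (rule poly_eqI_degree[of "\<zeta> ` I"])
    fix x assume "x \<in> \<zeta> ` I"
    then obtain k where "k \<in> I" "x = \<zeta> k" by blast
    have "poly q (\<zeta> k) = (\<Sum>i\<in>I. if i = k then poly p (\<zeta> i) else 0)"
      unfolding q_def poly_sum using \<open>k \<in> I\<close> by (intro sum.cong) (simp_all add: poly_b d_nonzero)
    then show "poly p x = poly q x"
      using fin \<open>k \<in> I\<close> \<open>x = \<zeta> k\<close> by simp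
  next
    show "degree p < card (\<zeta> ` I)"
      using deg card_image[OF inj] by simp
  next
    have "degree q \<le> card I - 1"
      unfolding q_def
      by (intro degree_sum_le) (use fin in \<open>auto intro: order.trans[OF degree_smult_le] simp: degree_b\<close>)
    then show "degree q < card (\<zeta> ` I)"
      using deg card_image[OF inj] by linarith
  qed
  then have "coeff p (card I - 1) = coeff q (card I - 1)"
    by simp
  also have "\<dots> = (\<Sum>i\<in>I. poly p (\<zeta> i) / d i * coeff (b i) (card I - 1))"
    by (simp only: q_def coeff_sum coeff_smult)
  also have "\<dots> = (\<Sum>i\<in>I. poly p (\<zeta> i) / d i)"
    by (rule sum.cong) (simp_all only: coeff_b mult_1_right)
  finally show ?thesis
    by (simp add: d_def)
qed

lemma triangular_hankel_unique:
  fixes x y l :: "nat \<Rightarrow> 'a::idom"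
  assumes m: "m \<ge> 1" and top: "l (m - 1) \<noteq> 0"
    and low: "\<And>n. n < m - 1 \<Longrightarrow> x n = y n"
    and eq: "\<And>s. s < m \<Longrightarrow> (\<Sum>p<m. x (p + s) * l p) = (\<Sum>p<m. y (p + s) * l p)"
  shows "n \<le> 2 * m - 2 \<Longrightarrow> x n = y n"
proof (induction n rule: less_induct)
  case (less n)
  show ?case
  proof (cases "n < m - 1")
    case False
    define s where "s = n - (m - 1)"
    have s: "s < m" "n = m - 1 + s" using less.prems False m unfolding s_def by linarith+
    have split_top: "(\<Sum>p<m. f (p + s) * l p) = f n * l (m - 1) + (\<Sum>p<m - 1. f (p + s) * l p)"
      for f :: "nat \<Rightarrow> 'a"
      using m s(2) by (cases m) (simp_all add: add.commute)
    have "(\<Sum>p<m - 1. x (p + s) * l p) = (\<Sum>p<m - 1. y (p + s) * l p)"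
      using less s by (intro sum.cong) auto
    then have "x n * l (m - 1) = y n * l (m - 1)"
      using eq[OF s(1)] split_top[of x] split_top[of y] by simp
    then show ?thesis using top by simp
  qed (use low in auto)
qed

lemma kap_add_left: "kap C (x + y) w = kap C x w + kap C y w"
  unfolding kap_def killing_def by (simp add: distrib_right sum.distrib)

lemma kap_add_right: "kap C w (x + y) = kap C w x + kap C w y"
  unfolding kap_def killing_def by (simp add: distrib_left distrib_right sum.distrib)

lemma kap_scale_left: "kap C (a *s x) w = a * kap C x w"
  unfolding kap_def killing_def by (simp add: sum_distrib_left mult.assoc)

lemma kap_scale_right: "kap C w (a *s x) = a * kap C w x"
  unfolding kap_def killing_def by (simp add: sum_distrib_left algebra_simps)

lemma kap_zero_left: "kap C 0 w = 0"
  unfolding kap_def killing_def by simp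

lemma kap_zero_right: "kap C w 0 = 0"
  unfolding kap_def killing_def by simp

lemma kap_sum_left: "kap C (\<Sum>k\<in>F. f k) w = (\<Sum>k\<in>F. kap C (f k) w)"
  by (induction F rule: infinite_finite_induct) (simp_all add: kap_zero_left kap_add_left)

lemma kap_sum_right: "kap C w (\<Sum>k\<in>F. f k) = (\<Sum>k\<in>F. kap C w (f k))"
  by (induction F rule: infinite_finite_induct) (simp_all add: kap_zero_right kap_add_right)

lemma integral_kap_gaudin_lax:
  assumes "finite S"
    and integrable: "\<forall>\<alpha>\<in>S. \<forall>\<beta>\<in>S. \<forall>p<m \<alpha>. \<forall>q<m \<beta>.
      (\<lambda>x. kap C (J \<alpha> p c x) (J \<beta> q c x)) integrable_on D"
  shows "integral D (\<lambda>x. kap C (gaudin_lax S m z J w c x) (gaudin_lax S m z J w c x)) =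
    (\<Sum>\<alpha>\<in>S. \<Sum>p<m \<alpha>. \<Sum>\<beta>\<in>S. \<Sum>q<m \<beta>. 1 / (w - z \<alpha>) ^ (p + 1) * (1 / (w - z \<beta>) ^ (q + 1))
       * integral D (\<lambda>x. kap C (J \<alpha> p c x) (J \<beta> q c x)))"
proof -
  have expand: "kap C (gaudin_lax S m z J w c x) (gaudin_lax S m z J w c x) =
    (\<Sum>\<alpha>\<in>S. \<Sum>p<m \<alpha>. \<Sum>\<beta>\<in>S. \<Sum>q<m \<beta>. 1 / (w - z \<alpha>) ^ (p + 1) * (1 / (w - z \<beta>) ^ (q + 1))
       * kap C (J \<alpha> p c x) (J \<beta> q c x))" for x
    unfolding gaudin_lax_def kap_sum_left kap_scale_left
    unfolding kap_sum_right kap_scale_right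
    by (simp only: sum_distrib_left mult.assoc)
  have integral_term: "((\<lambda>x. a * kap C (J \<alpha> p c x) (J \<beta> q c x))
      has_integral a * integral D (\<lambda>x. kap C (J \<alpha> p c x) (J \<beta> q c x))) D"
    if "\<alpha> \<in> S" "\<beta> \<in> S" "p < m \<alpha>" "q < m \<beta>" for \<alpha> \<beta> p q a
    using integrable that by (intro has_integral_mult_right integrable_integral) auto
  then show ?thesis
    unfolding expand
    by (intro integral_unique has_integral_sum finite_lessThan assms(1) ballI integral_term) auto
qed

lemma poly_prod_linear_powers_div:
  fixes z :: "'s \<Rightarrow> 'a::field"
  assumes "finite S" "\<alpha> \<in> S" "k \<le> m \<alpha>" "w \<noteq> z \<alpha>"
  shows "poly (\<Prod>\<gamma>\<in>S. [:- z \<gamma>, 1:] ^ (m \<gamma> - (if \<gamma> = \<alpha> then k else 0))) w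
    = (\<Prod>\<gamma>\<in>S. (w - z \<gamma>) ^ m \<gamma>) / (w - z \<alpha>) ^ k"
proof -
  have "(\<Prod>\<gamma>\<in>S. (w - z \<gamma>) ^ (m \<gamma> - (if \<gamma> = \<alpha> then k else 0))) * (w - z \<alpha>) ^ k
      = (\<Prod>\<gamma>\<in>S. (w - z \<gamma>) ^ m \<gamma>)"
    using prod_power_diff_mult[of S "\<lambda>\<gamma>. if \<gamma> = \<alpha> then k else 0" m "\<lambda>\<gamma>. w - z \<gamma>"]
      prod_power_delta[OF assms(1,2), of "\<lambda>\<gamma>. w - z \<gamma>" k] assms(3)
    by simp
  then show ?thesis
    using assms(4) by (simp add: poly_prod eq_divide_eq)
qed

definition twist_numerator :: "'s set \<Rightarrow> ('s \<Rightarrow> nat) \<Rightarrow> ('s \<Rightarrow> nat \<Rightarrow> complex) \<Rightarrow>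
    ('s \<Rightarrow> complex) \<Rightarrow> real \<Rightarrow> complex poly" where
  "twist_numerator S m lev z linf =
     smult (- complex_of_real linf) (\<Prod>\<gamma>\<in>S. [:- z \<gamma>, 1:] ^ m \<gamma>)
     + (\<Sum>\<alpha>\<in>S. \<Sum>p<m \<alpha>. smult (lev \<alpha> p)
         (\<Prod>\<gamma>\<in>S. [:- z \<gamma>, 1:] ^ (m \<gamma> - (if \<gamma> = \<alpha> then p + 1 else 0))))"

lemma degree_prod_linear_powers_less:
  assumes "finite S" "\<alpha> \<in> S" "p < m \<alpha>"
  shows "degree (\<Prod>\<gamma>\<in>S. [:- z \<gamma>, 1:] ^ (m \<gamma> - (if \<gamma> = \<alpha> then p + 1 else 0)) :: 'a::idom poly)
    < (\<Sum>\<alpha>\<in>S. m \<alpha>)"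
  unfolding degree_prod_linear_powers by (rule sum_strict_mono_ex1) (use assms in auto)

lemma degree_twist_numerator:
  assumes "finite S"
  shows "degree (twist_numerator S m lev z linf) \<le> (\<Sum>\<alpha>\<in>S. m \<alpha>)"
  unfolding twist_numerator_def using assms degree_prod_linear_powers_less[where m = m and z = z, OF assms]
  by (intro degree_add_le order.trans[OF degree_smult_le] degree_sum_le)
     (auto simp: degree_prod_linear_powers intro: less_imp_le)

lemma coeff_twist_numerator:
  assumes "finite S"
  shows "coeff (twist_numerator S m lev z linf) (\<Sum>\<alpha>\<in>S. m \<alpha>) = - complex_of_real linf"
proof -
  have "coeff (\<Prod>\<gamma>\<in>S. [:- z \<gamma>, 1:] ^ m \<gamma>) (\<Sum>\<alpha>\<in>S. m \<alpha>) = 1"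
    using lead_coeff_prod_linear_powers[where c = z and k = m and A = S]
    by (simp add: degree_prod_linear_powers)
  moreover have "coeff (\<Prod>\<gamma>\<in>S. [:- z \<gamma>, 1:] ^ (m \<gamma> - (if \<gamma> = \<alpha> then p + 1 else 0)))
      (\<Sum>\<alpha>\<in>S. m \<alpha>) = 0" if "\<alpha> \<in> S" "p < m \<alpha>" for \<alpha> p
    using degree_prod_linear_powers_less[where m = m and z = z, OF assms that] by (simp add: coeff_eq_0)
  ultimately show ?thesis
    by (simp add: twist_numerator_def coeff_sum)
qed

lemma poly_twist_numerator:
  assumes "finite S" "w \<notin> z ` S"
  shows "poly (twist_numerator S m lev z linf) w = (\<Prod>\<gamma>\<in>S. (w - z \<gamma>) ^ m \<gamma>) * twist S m lev z linf w"
proof -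
  have "poly (twist_numerator S m lev z linf) w = - linf * (\<Prod>\<gamma>\<in>S. (w - z \<gamma>) ^ m \<gamma>)
      + (\<Sum>\<alpha>\<in>S. \<Sum>p<m \<alpha>. lev \<alpha> p * ((\<Prod>\<gamma>\<in>S. (w - z \<gamma>) ^ m \<gamma>) / (w - z \<alpha>) ^ (p + 1)))"
    unfolding twist_numerator_def poly_add poly_smult poly_sum using assms
    by (intro arg_cong2[where f = "(+)"] sum.cong arg_cong2[where f = "(*)"] refl
        poly_prod_linear_powers_div) (auto simp: poly_prod)
  then show ?thesis
    by (simp add: twist_def sum_distrib_left algebra_simps)
qed

locale twist_zeros =
  fixes S :: "'s set" and m :: "'s \<Rightarrow> nat" and lev :: "'s \<Rightarrow> nat \<Rightarrow> complex"
    and z :: "'s \<Rightarrow> complex" and linf :: real and \<zeta> :: "nat \<Rightarrow> complex"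
  assumes finite_sites: "finite S"
    and zeta_zero: "\<And>i. i < (\<Sum>\<alpha>\<in>S. m \<alpha>) \<Longrightarrow> \<zeta> i \<notin> z ` S \<and> twist S m lev z linf (\<zeta> i) = 0"
    and inj_zeta: "inj_on \<zeta> {..<(\<Sum>\<alpha>\<in>S. m \<alpha>)}"
    and linf_nonzero: "linf \<noteq> 0"
begin

abbreviation M :: nat where "M \<equiv> \<Sum>\<alpha>\<in>S. m \<alpha>"

abbreviation \<phi> :: "complex \<Rightarrow> complex" where "\<phi> \<equiv> twist S m lev z linf"

text \<open>The sum of the residues of \<open>f / \<phi>\<close> at the zeros of \<open>\<phi>\<close>, for \<open>f\<close> regular there.\<close>
definition zero_sum :: "(complex \<Rightarrow> complex) \<Rightarrow> complex" where
  "zero_sum f = (\<Sum>i<M. f (\<zeta> i) / deriv \<phi> (\<zeta> i))"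

lemma zero_sum_sum: "zero_sum (\<lambda>w. \<Sum>a\<in>A. f a w) = (\<Sum>a\<in>A. zero_sum (f a))"
  unfolding zero_sum_def sum_divide_distrib by (rule sum.swap)

lemma zero_sum_mult_left: "zero_sum (\<lambda>w. c * f w) = c * zero_sum f"
  unfolding zero_sum_def by (simp add: sum_distrib_left)

lemma zero_sum_diff: "zero_sum (\<lambda>w. f w - g w) = zero_sum f - zero_sum g"
  unfolding zero_sum_def by (simp add: diff_divide_distrib sum_subtractf)

lemma zero_sum_mult_twist: "zero_sum (\<lambda>w. f w * \<phi> w) = 0"
  unfolding zero_sum_def using zeta_zero by simp

lemma twist_eq_zeros_over_poles:
  assumes w: "w \<notin> z ` S"
  shows "\<phi> w = - linf * (\<Prod>j<M. w - \<zeta> j) / (\<Prod>\<gamma>\<in>S. (w - z \<gamma>) ^ m \<gamma>)"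
proof -
  define N where "N = twist_numerator S m lev z linf"
  have deg: "degree N \<le> M" and lead: "coeff N M = - complex_of_real linf"
    and poly_N: "\<And>w. w \<notin> z ` S \<Longrightarrow> poly N w = (\<Prod>\<gamma>\<in>S. (w - z \<gamma>) ^ m \<gamma>) * \<phi> w"
    unfolding N_def using degree_twist_numerator coeff_twist_numerator poly_twist_numerator finite_sites
    by auto
  define Z where "Z = (\<Prod>j<M. [:- \<zeta> j, 1:])"
  have degree_Z: "degree Z = M" and coeff_Z: "coeff Z M = 1"
    using degree_prod_linear_powers[where c = \<zeta> and k = "\<lambda>_. 1" and A = "{..<M}"]
      lead_coeff_prod_linear_powers[where c = \<zeta> and k = "\<lambda>_. 1" and A = "{..<M}"]
    by (simp_all add: Z_def)
  have "N = smult (- complex_of_real linf) Z"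
  proof (rule poly_eqI_degree_lead_coeff[where n = M and A = "\<zeta> ` {..<M}"])
    fix x assume "x \<in> \<zeta> ` {..<M}"
    then obtain k where "k < M" "x = \<zeta> k" by blast
    then show "poly N x = poly (smult (- complex_of_real linf) Z) x"
      using poly_N zeta_zero by (auto simp: Z_def poly_prod)
  qed (use lead coeff_Z deg degree_Z inj_zeta in \<open>simp_all add: card_image\<close>)
  then have "(\<Prod>\<gamma>\<in>S. (w - z \<gamma>) ^ m \<gamma>) * \<phi> w = - linf * (\<Prod>j<M. w - \<zeta> j)"
    using poly_N[OF w] by (simp add: Z_def poly_prod)
  moreover have "(\<Prod>\<gamma>\<in>S. (w - z \<gamma>) ^ m \<gamma>) \<noteq> 0"
    using w finite_sites by (auto simp: prod_zero_iff)
  ultimately show ?thesis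
    by (simp add: field_simps)
qed

lemma deriv_twist_at_zero:
  assumes i: "i < M"
  shows "deriv \<phi> (\<zeta> i) = - linf * (\<Prod>j\<in>{..<M} - {i}. \<zeta> i - \<zeta> j) / (\<Prod>\<gamma>\<in>S. (\<zeta> i - z \<gamma>) ^ m \<gamma>)"
proof -
  define U where "U = - z ` S"
  define g where "g w = - linf * (\<Prod>j\<in>{..<M} - {i}. w - \<zeta> j) / (\<Prod>\<gamma>\<in>S. (w - z \<gamma>) ^ m \<gamma>)" for w
  have U: "open U" "\<zeta> i \<in> U"
    using finite_sites zeta_zero[OF i] by (auto simp: U_def intro: finite_imp_closed)
  have "g holomorphic_on U"
    unfolding g_def U_def by (intro holomorphic_intros) (use finite_sites in \<open>auto simp: prod_zero_iff\<close>)
  then obtain g' where g': "(g has_field_derivative g') (at (\<zeta> i))"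
    using U holomorphic_on_imp_differentiable_at field_differentiable_def by metis
  have "((\<lambda>w. (w - \<zeta> i) * g w) has_field_derivative g (\<zeta> i)) (at (\<zeta> i))"
    using DERIV_mult[OF DERIV_diff[OF DERIV_ident DERIV_const[of "\<zeta> i"]] g'] by simp
  moreover have "(w - \<zeta> i) * g w = \<phi> w" if "w \<in> U" for w
  proof -
    have "(\<Prod>j<M. w - \<zeta> j) = (w - \<zeta> i) * (\<Prod>j\<in>{..<M} - {i}. w - \<zeta> j)"
      using i by (simp add: prod.remove)
    then show ?thesis
      using twist_eq_zeros_over_poles that by (simp add: U_def g_def)
  qed
  ultimately have "(\<phi> has_field_derivative g (\<zeta> i)) (at (\<zeta> i))"
    using has_field_derivative_transform_within_open U by blast
  then show ?thesis
    unfolding g_def by (rule DERIV_imp_deriv)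
qed

lemma zero_sum_inverse_pole_product:
  assumes e_le: "\<forall>\<gamma>\<in>S. e \<gamma> \<le> m \<gamma>" and e_pos: "1 \<le> (\<Sum>\<gamma>\<in>S. e \<gamma>)"
  shows "zero_sum (\<lambda>w. 1 / (\<Prod>\<gamma>\<in>S. (w - z \<gamma>) ^ e \<gamma>))
    = (if (\<Sum>\<gamma>\<in>S. e \<gamma>) = 1 then - 1 / linf else 0)"
proof -
  define r where "r = (\<Prod>\<gamma>\<in>S. [:- z \<gamma>, 1:] ^ (m \<gamma> - e \<gamma>))"
  define d where "d i = (\<Prod>j\<in>{..<M} - {i}. \<zeta> i - \<zeta> j)" for i
  have sum_e_le: "(\<Sum>\<gamma>\<in>S. e \<gamma>) \<le> M"
    using e_le by (intro sum_mono) auto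
  moreover have degree_r: "degree r = M - (\<Sum>\<gamma>\<in>S. e \<gamma>)"
    unfolding r_def degree_prod_linear_powers by (rule sum_subtractf_nat) (use e_le in auto)
  moreover have "lead_coeff r = 1"
    unfolding r_def by (rule lead_coeff_prod_linear_powers)
  ultimately have coeff_r: "coeff r (M - 1) = (if (\<Sum>\<gamma>\<in>S. e \<gamma>) = 1 then 1 else 0)"
    using e_pos by (auto simp: coeff_eq_0)
  have summand: "1 / (\<Prod>\<gamma>\<in>S. (\<zeta> i - z \<gamma>) ^ e \<gamma>) / deriv \<phi> (\<zeta> i) = - 1 / linf * (poly r (\<zeta> i) / d i)"
    if i: "i < M" for i
  proof -
    have "poly r (\<zeta> i) * (\<Prod>\<gamma>\<in>S. (\<zeta> i - z \<gamma>) ^ e \<gamma>) = (\<Prod>\<gamma>\<in>S. (\<zeta> i - z \<gamma>) ^ m \<gamma>)"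
      using prod_power_diff_mult[OF e_le] by (simp add: r_def poly_prod)
    moreover have "d i \<noteq> 0"
      using inj_zeta i by (auto simp: d_def inj_on_def)
    moreover have "(\<Prod>\<gamma>\<in>S. (\<zeta> i - z \<gamma>) ^ e \<gamma>) \<noteq> 0"
      using zeta_zero[OF i] finite_sites by (auto simp: prod_zero_iff)
    ultimately show ?thesis
      using deriv_twist_at_zero[OF i] linf_nonzero by (simp add: d_def field_simps)
  qed
  have "zero_sum (\<lambda>w. 1 / (\<Prod>\<gamma>\<in>S. (w - z \<gamma>) ^ e \<gamma>)) = - 1 / linf * (\<Sum>i<M. poly r (\<zeta> i) / d i)"
    unfolding zero_sum_def sum_distrib_left by (rule sum.cong) (simp_all only: summand lessThan_iff)
  also have "(\<Sum>i<M. poly r (\<zeta> i) / d i) = coeff r (M - 1)"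
    using lagrange_leading_coeff[of "{..<M}" \<zeta> r] inj_zeta degree_r e_pos sum_e_le by (simp add: d_def)
  finally show ?thesis
    using coeff_r by simp
qed

lemma zero_sum_inverse_pole_power:
  assumes "\<alpha> \<in> S" "1 \<le> k" "k \<le> m \<alpha>"
  shows "zero_sum (\<lambda>w. 1 / (w - z \<alpha>) ^ k) = (if k = 1 then - 1 / linf else 0)"
  using zero_sum_inverse_pole_product[of "\<lambda>\<gamma>. if \<gamma> = \<alpha> then k else 0"] assms finite_sites
  by (simp add: prod_power_delta)

lemma zero_sum_inverse_two_poles:
  assumes "\<alpha> \<in> S" "\<beta> \<in> S" "\<alpha> \<noteq> \<beta>" "1 \<le> a" "a \<le> m \<alpha>" "1 \<le> b" "b \<le> m \<beta>"
  shows "zero_sum (\<lambda>w. 1 / ((w - z \<alpha>) ^ a * (w - z \<beta>) ^ b)) = 0"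
  using zero_sum_inverse_pole_product[of "\<lambda>\<gamma>. (if \<gamma> = \<alpha> then a else 0) + (if \<gamma> = \<beta> then b else 0)"]
    assms finite_sites
  by (simp add: power_add prod.distrib prod_power_delta sum.distrib)

lemma zero_sum_pole_moments:
  assumes \<alpha>: "\<alpha> \<in> S" and k: "1 \<le> k" "k \<le> m \<alpha>"
  shows "(\<Sum>q<m \<alpha>. lev \<alpha> q * zero_sum (\<lambda>w. 1 / (w - z \<alpha>) ^ (k + q + 1)))
    = (if k = 1 then - 1 else 0)"
proof -
  define c where "c \<gamma> q = zero_sum (\<lambda>w. 1 / ((w - z \<alpha>) ^ k * (w - z \<gamma>) ^ (q + 1)))" for \<gamma> q
  have "0 = zero_sum (\<lambda>w. 1 / (w - z \<alpha>) ^ k * \<phi> w)"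
    by (rule zero_sum_mult_twist[symmetric])
  also have "\<dots> = zero_sum (\<lambda>w. (\<Sum>\<gamma>\<in>S. \<Sum>q<m \<gamma>. lev \<gamma> q * (1 / ((w - z \<alpha>) ^ k * (w - z \<gamma>) ^ (q + 1))))
      - linf * (1 / (w - z \<alpha>) ^ k))"
    by (simp add: twist_def sum_distrib_left right_diff_distrib mult.commute)
  also have "\<dots> = (\<Sum>\<gamma>\<in>S. \<Sum>q<m \<gamma>. lev \<gamma> q * c \<gamma> q) - linf * zero_sum (\<lambda>w. 1 / (w - z \<alpha>) ^ k)"
    by (simp only: zero_sum_diff zero_sum_sum zero_sum_mult_left c_def)
  also have "(\<Sum>\<gamma>\<in>S. \<Sum>q<m \<gamma>. lev \<gamma> q * c \<gamma> q) = (\<Sum>q<m \<alpha>. lev \<alpha> q * c \<alpha> q)"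
  proof -
    have "c \<gamma> q = 0" if "\<gamma> \<in> S - {\<alpha>}" "q < m \<gamma>" for \<gamma> q
      unfolding c_def by (rule zero_sum_inverse_two_poles) (use \<alpha> k that in auto)
    then have "(\<Sum>q<m \<gamma>. lev \<gamma> q * c \<gamma> q) = 0" if "\<gamma> \<in> S - {\<alpha>}" for \<gamma>
      using that by simp
    then show ?thesis
      using finite_sites \<alpha> by (simp add: sum.remove)
  qed
  finally have "(\<Sum>q<m \<alpha>. lev \<alpha> q * c \<alpha> q) = linf * zero_sum (\<lambda>w. 1 / (w - z \<alpha>) ^ k)"
    by simp
  moreover have "c \<alpha> q = zero_sum (\<lambda>w. 1 / (w - z \<alpha>) ^ (k + q + 1))" for q
    by (simp only: c_def power_add[symmetric] add.assoc)
  ultimately show ?thesis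
    using zero_sum_inverse_pole_power[OF \<alpha> k] linf_nonzero by simp
qed

text \<open>The residue sums \<open>-zero_sum (\<lambda>w. 1 / (w - z \<alpha>) ^ (n + 2))\<close> solve the triangular system
  that defines \<open>\<eta>\<^sup>\<alpha>\<close>: the equations with \<open>r = m\<^sub>\<alpha> - 1\<close> kill the low entries, and those with
  \<open>r = 0\<close> determine the others.\<close>
lemma eta_eq_zero_sum:
  fixes eta :: "nat \<Rightarrow> complex"
  assumes \<alpha>: "\<alpha> \<in> S" and m_pos: "1 \<le> m \<alpha>" and top: "lev \<alpha> (m \<alpha> - 1) \<noteq> 0"
    and eta: "\<forall>q<m \<alpha>. \<forall>r<m \<alpha>.
      (\<Sum>p\<le>m \<alpha> - 1 - r. eta (p + q) * lev \<alpha> (p + r)) = (if q = r then 1 else 0)"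
    and n: "n \<le> 2 * m \<alpha> - 2"
  shows "eta n = - zero_sum (\<lambda>w. 1 / (w - z \<alpha>) ^ (n + 2))"
proof (rule triangular_hankel_unique[where l = "lev \<alpha>", OF m_pos top _ _ n])
  fix n assume n: "n < m \<alpha> - 1"
  have "eta n * lev \<alpha> (m \<alpha> - 1) = 0"
    using eta[rule_format, of n "m \<alpha> - 1"] n by simp
  then show "eta n = - zero_sum (\<lambda>w. 1 / (w - z \<alpha>) ^ (n + 2))"
    using top zero_sum_inverse_pole_power[OF \<alpha>, of "n + 2"] n by simp
next
  fix s assume s: "s < m \<alpha>"
  have "{..m \<alpha> - 1} = {..<m \<alpha>}"
    using m_pos by auto
  then have "(\<Sum>p<m \<alpha>. eta (p + s) * lev \<alpha> p) = (if s = 0 then 1 else 0)"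
    using eta[rule_format, of s 0] s m_pos by simp
  moreover have "(\<Sum>p<m \<alpha>. - zero_sum (\<lambda>w. 1 / (w - z \<alpha>) ^ (p + s + 2)) * lev \<alpha> p)
      = (if s = 0 then 1 else 0)"
  proof -
    have "s + 1 + q + 1 = q + s + 2" for q
      by simp
    then show ?thesis
      using zero_sum_pole_moments[OF \<alpha>, of "s + 1"] s
      by (simp only:) (simp add: sum_negf mult.commute)
  qed
  ultimately show "(\<Sum>p<m \<alpha>. eta (p + s) * lev \<alpha> p)
      = (\<Sum>p<m \<alpha>. - zero_sum (\<lambda>w. 1 / (w - z \<alpha>) ^ (p + s + 2)) * lev \<alpha> p)"
    by simp
qed

lemma zero_sum_pole_pair:
  fixes eta :: "nat \<Rightarrow> complex"
  assumes \<alpha>: "\<alpha> \<in> S" and \<beta>: "\<beta> \<in> S" and p: "p < m \<alpha>" and q: "q < m \<beta>"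
    and top: "lev \<alpha> (m \<alpha> - 1) \<noteq> 0"
    and eta: "\<forall>q<m \<alpha>. \<forall>r<m \<alpha>.
      (\<Sum>p\<le>m \<alpha> - 1 - r. eta (p + q) * lev \<alpha> (p + r)) = (if q = r then 1 else 0)"
  shows "zero_sum (\<lambda>w. 1 / (w - z \<alpha>) ^ (p + 1) * (1 / (w - z \<beta>) ^ (q + 1)))
    = (if \<beta> = \<alpha> then - eta (p + q) else 0)"
proof (cases "\<beta> = \<alpha>")
  case True
  have "p + 1 + (q + 1) = p + q + 2"
    by simp
  then have "(\<lambda>w. 1 / (w - z \<alpha>) ^ (p + 1) * (1 / (w - z \<beta>) ^ (q + 1))) = (\<lambda>w. 1 / (w - z \<alpha>) ^ (p + q + 2))"
    unfolding True by (simp only: times_divide_times_eq mult_1 power_add[symmetric])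
  then show ?thesis
    using eta_eq_zero_sum[OF \<alpha> _ top eta, of "p + q"] True p q by simp
next
  case False
  then show ?thesis
    using zero_sum_inverse_two_poles[OF \<alpha> \<beta> _, of "p + 1" "q + 1"] p q by simp
qed

lemma zero_sum_pole_pairs:
  fixes eta :: "nat \<Rightarrow> complex" and K :: "'s \<Rightarrow> nat \<Rightarrow> complex"
  assumes \<alpha>: "\<alpha> \<in> S" and p: "p < m \<alpha>" and top: "lev \<alpha> (m \<alpha> - 1) \<noteq> 0"
    and eta: "\<forall>q<m \<alpha>. \<forall>r<m \<alpha>.
      (\<Sum>p\<le>m \<alpha> - 1 - r. eta (p + q) * lev \<alpha> (p + r)) = (if q = r then 1 else 0)"
  shows "(\<Sum>\<beta>\<in>S. \<Sum>q<m \<beta>. K \<beta> q * zero_sum (\<lambda>w. 1 / (w - z \<alpha>) ^ (p + 1) * (1 / (w - z \<beta>) ^ (q + 1))))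
    = - (\<Sum>q<m \<alpha>. K \<alpha> q * eta (p + q))"
proof -
  have "(\<Sum>q<m \<beta>. K \<beta> q * zero_sum (\<lambda>w. 1 / (w - z \<alpha>) ^ (p + 1) * (1 / (w - z \<beta>) ^ (q + 1)))) = 0"
    if "\<beta> \<in> S - {\<alpha>}" for \<beta>
    by (intro sum.neutral ballI, subst zero_sum_pole_pair[OF \<alpha> _ p _ top eta]) (use that in auto)
  moreover have "(\<Sum>q<m \<alpha>. K \<alpha> q * zero_sum (\<lambda>w. 1 / (w - z \<alpha>) ^ (p + 1) * (1 / (w - z \<alpha>) ^ (q + 1))))
      = (\<Sum>q<m \<alpha>. - (K \<alpha> q * eta (p + q)))"
    by (intro sum.cong refl, subst zero_sum_pole_pair[OF \<alpha> \<alpha> p _ top eta]) auto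
  ultimately show ?thesis
    using finite_sites \<alpha> by (simp add: sum.remove sum_negf)
qed

lemma sum_Qcharge_eq_sum_Dzero:
  assumes top: "\<forall>\<alpha>\<in>S. lev \<alpha> (m \<alpha> - 1) \<noteq> 0"
    and eta: "\<forall>\<alpha>\<in>S. \<forall>q<m \<alpha>. \<forall>r<m \<alpha>.
      (\<Sum>p\<le>m \<alpha> - 1 - r. eta \<alpha> (p + q) * lev \<alpha> (p + r)) = (if q = r then 1 else 0)"
    and integrable: "\<forall>\<alpha>\<in>S. \<forall>\<beta>\<in>S. \<forall>p<m \<alpha>. \<forall>q<m \<beta>.
      (\<lambda>x. kap C (J \<alpha> p c x) (J \<beta> q c x)) integrable_on dom circ L"
  shows "(\<Sum>i<M. Qcharge C circ L S m lev z linf J (\<zeta> i) c) = (\<Sum>\<alpha>\<in>S. Dzero C circ L m eta J \<alpha> c)"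
proof -
  define K where "K \<alpha> p \<beta> q = integral (dom circ L) (\<lambda>x. kap C (J \<alpha> p c x) (J \<beta> q c x))"
    for \<alpha> p \<beta> q
  define u where "u \<alpha> p w = 1 / (w - z \<alpha>) ^ (p + 1)" for \<alpha> p w
  have "(\<Sum>i<M. Qcharge C circ L S m lev z linf J (\<zeta> i) c)
      = zero_sum (\<lambda>w. - (1 / 2) * (\<Sum>\<alpha>\<in>S. \<Sum>p<m \<alpha>. \<Sum>\<beta>\<in>S. \<Sum>q<m \<beta>. K \<alpha> p \<beta> q * (u \<alpha> p w * u \<beta> q w)))"
    unfolding Qcharge_def zero_sum_def integral_kap_gaudin_lax[where S = S and m = m and C = C and J = J and c = c and D = "dom circ L",
        OF finite_sites integrable]
    by (simp add: K_def u_def mult_ac)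
  also have "\<dots> = - (1 / 2) * (\<Sum>\<alpha>\<in>S. \<Sum>p<m \<alpha>. \<Sum>\<beta>\<in>S. \<Sum>q<m \<beta>.
      K \<alpha> p \<beta> q * zero_sum (\<lambda>w. u \<alpha> p w * u \<beta> q w))"
    by (simp only: zero_sum_mult_left zero_sum_sum)
  also have "\<dots> = - (1 / 2) * (\<Sum>\<alpha>\<in>S. \<Sum>p<m \<alpha>. - (\<Sum>q<m \<alpha>. K \<alpha> p \<alpha> q * eta \<alpha> (p + q)))"
    unfolding u_def using top eta
    by (intro arg_cong[where f = "(*) _"] sum.cong refl zero_sum_pole_pairs) auto
  also have "\<dots> = (\<Sum>\<alpha>\<in>S. Dzero C circ L m eta J \<alpha> c)"
    by (simp add: Dzero_def K_def sum_negf sum_distrib_left mult_ac)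
  finally show ?thesis .
qed

end

theorem proposition2p3:
  fixes C :: "'n::finite \<Rightarrow> 'n \<Rightarrow> 'n \<Rightarrow> complex"
    and \<tau> :: "complex^'n \<Rightarrow> complex^'n"
    and circ :: bool and L :: real
    and S :: "'s set" and conjs :: "'s \<Rightarrow> 's"
    and m :: "'s \<Rightarrow> nat" and lev :: "'s \<Rightarrow> nat \<Rightarrow> complex" and z :: "'s \<Rightarrow> complex"
    and linf :: real and eta :: "'s \<Rightarrow> nat \<Rightarrow> complex"
    and A :: "('c \<Rightarrow> complex) set"
    and pb :: "('c \<Rightarrow> complex) \<Rightarrow> ('c \<Rightarrow> complex) \<Rightarrow> ('c \<Rightarrow> complex)"
    and Flds :: "('c \<Rightarrow> real \<Rightarrow> complex) set"
    and J :: "'s \<Rightarrow> nat \<Rightarrow> 'c \<Rightarrow> real \<Rightarrow> complex^'n"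
    and P :: "'c \<Rightarrow> complex"
    and \<zeta> :: "nat \<Rightarrow> complex"
  assumes simple: "simple_lie_algebra C"
    and realform: "antilinear_involution C \<tau>"
    and circL: "circ \<longrightarrow> L > 0"
    \<comment> \<open>sites: real sites are the fixed points of conjs, complex sites come in pairs\<close>
    and finS: "finite S"
    and conj_in: "\<forall>\<alpha>\<in>S. conjs \<alpha> \<in> S"
    and conj_inv: "\<forall>\<alpha>\<in>S. conjs (conjs \<alpha>) = \<alpha>"
    and m_pos: "\<forall>\<alpha>\<in>S. m \<alpha> \<ge> 1"
    and m_conj: "\<forall>\<alpha>\<in>S. m (conjs \<alpha>) = m \<alpha>"
    and lev_conj: "\<forall>\<alpha>\<in>S. \<forall>p<m \<alpha>. lev (conjs \<alpha>) p = cnj (lev \<alpha> p)"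
    and lev_top: "\<forall>\<alpha>\<in>S. lev \<alpha> (m \<alpha> - 1) \<noteq> 0"
    and z_conj: "\<forall>\<alpha>\<in>S. z (conjs \<alpha>) = cnj (z \<alpha>)"
    and z_inj: "inj_on z S"
    and linf_nz: "linf \<noteq> 0"
    \<comment> \<open>eta: the (unique) solution of the defining linear system\<close>
    and eta_def: "\<forall>\<alpha>\<in>S. \<forall>q<m \<alpha>. \<forall>r<m \<alpha>.
        (\<Sum>p\<le>m \<alpha> - 1 - r. eta \<alpha> (p + q) * lev \<alpha> (p + r)) = (if q = r then 1 else 0)"
    \<comment> \<open>the Poisson algebra of local observables and its fields\<close>
    and poisson: "poisson_algebra A pb"
    and smear_in: "\<forall>\<phi>\<in>Flds. \<forall>f. test_fun circ L f \<longrightarrow> smear circ L \<phi> f \<in> A"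
    and fld_periodic: "circ \<longrightarrow> (\<forall>\<phi>\<in>Flds. \<forall>c x. \<phi> c (x + L) = \<phi> c x)"
    and J_flds: "\<forall>\<alpha>\<in>S. \<forall>p<m \<alpha>. \<forall>i. (\<lambda>c x. J \<alpha> p c x $ i) \<in> Flds"
    and J_local: "\<forall>\<alpha>\<in>S. \<forall>\<beta>\<in>S. \<forall>q<m \<alpha>. \<forall>r<m \<beta>. \<forall>c.
        (\<lambda>x. kap C (J \<alpha> q c x) (J \<beta> r c x)) integrable_on dom circ L"
    and J_bracket: "\<forall>\<alpha>\<in>S. \<forall>\<beta>\<in>S. \<forall>p<m \<alpha>. \<forall>q<m \<beta>. \<forall>f h.
        test_fun circ L f \<longrightarrow> test_fun circ L h \<longrightarrow>
        pb (gsmear C circ L (J \<alpha> p) f) (gsmear C circ L (J \<beta> q) h) =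
          (if \<alpha> = \<beta> \<and> p + q < m \<alpha> then
             (\<lambda>c. gsmear C circ L (J \<alpha> (p + q)) (\<lambda>x. lb C (f x) (h x)) c
                 + lev \<alpha> (p + q) * integral (dom circ L) (\<lambda>x. kap C (vector_derivative f (at x)) (h x)))
           else (\<lambda>_. 0))"
    and J_real: "\<forall>\<alpha>\<in>S. \<forall>p<m \<alpha>. \<forall>c x. \<tau> (J \<alpha> p c x) = J (conjs \<alpha>) p c x"
    \<comment> \<open>momentum: its Hamiltonian flow is the x-derivative on all fields\<close>
    and P_in: "P \<in> A"
    and momentum: "\<forall>\<phi>\<in>Flds. \<forall>f::real \<Rightarrow> complex. test_fun circ L f \<longrightarrow>
        pb P (smear circ L \<phi> f) = (\<lambda>c. - smear circ L \<phi> (\<lambda>x. vector_derivative f (at x)) c)"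
    \<comment> \<open>suitability\<close>
    and suitable: "P = (\<lambda>c. \<Sum>\<alpha>\<in>S. Dzero C circ L m eta J \<alpha> c)"
    \<comment> \<open>the zeros of the twist function are exactly zeta_0..zeta_(M-1), all simple\<close>
    and zeros: "{w. w \<notin> z ` S \<and> twist S m lev z linf w = 0} = \<zeta> ` {..<(\<Sum>\<alpha>\<in>S. m \<alpha>)}"
    and zeta_inj: "inj_on \<zeta> {..<(\<Sum>\<alpha>\<in>S. m \<alpha>)}"
    and zeta_simple: "\<forall>i<(\<Sum>\<alpha>\<in>S. m \<alpha>). deriv (twist S m lev z linf) (\<zeta> i) \<noteq> 0"
  shows "P = (\<lambda>c. \<Sum>i<(\<Sum>\<alpha>\<in>S. m \<alpha>). Qcharge C circ L S m lev z linf J (\<zeta> i) c)"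
proof -
  interpret twist_zeros S m lev z linf \<zeta>
  proof
    fix i assume "i < (\<Sum>\<alpha>\<in>S. m \<alpha>)"
    then show "\<zeta> i \<notin> z ` S \<and> twist S m lev z linf (\<zeta> i) = 0"
      using zeros by blast
  qed (fact finS zeta_inj linf_nz)+
  have "(\<Sum>i<(\<Sum>\<alpha>\<in>S. m \<alpha>). Qcharge C circ L S m lev z linf J (\<zeta> i) c)
      = (\<Sum>\<alpha>\<in>S. Dzero C circ L m eta J \<alpha> c)" for c
    using lev_top eta_def J_local by (intro sum_Qcharge_eq_sum_Dzero) auto
  then show ?thesis
    unfolding suitable by simp
qed

end
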